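(* Let $q\in(0,1)$ and let $\alpha,p\ge0$ be integers. For every integer $t$ with $0\le t\le p$, $$\sum_{M\in M^{(\alpha)}_{p,0}(t)}q^{\mathrm{cr}(M)}=\begin{bmatrix} p+\alpha\\ t\end{bmatrix}_q\begin{bmatrix} p\\ t\end{bmatrix}_q[t]_q!.$$
   Context: $[n]_q=\frac{1-q^n}{1-q}$, $[n]_q!=\prod_{m=1}^n[m]_q$, $\begin{bmatrix} n\\ m\end{bmatrix}_q=\frac{[n]_q!}{[m]_q![n-m]_q!}$ ($=0$ if $m>n$). Bipartite matchings: for integers $n,j,\alpha\ge0$, let $T_-=\{-\alpha-j,\dots,-1\}$, $T_+=\{1,\dots,n\}$ (top row), $B_-=\{-\tilde j,\dots,-\tilde 1\}$, $B_+=\{\tilde1,\dots,\tilde n\}$ (bottom row; $\tilde m$ is a formal copy of the integer $m$, bottom vertices compared via these integers). A bipartite matching is a set partition of $T_-\cup T_+\cup B_-\cup B_+$ into singletons (isolated vertices) and blocks $\{a,\tilde b\}$ with $a$ top, $\tilde b$ bottom (edges, written $(a,\tilde b)$). $M^{(\alpha)}_{n,j}$ is the set of such matchings with no edge between $T_-$ and $B_-$; $M^{(\alpha)}_{n,j}(l)$ its subset with exactly $l$ edges. The crossing number $\mathrm{cr}(M)$ is the total number of: (C1) unordered pairs of edges $(a,\tilde b),(c,\tilde d)$ with $a<c$ and $d<b$; (C2) pairs of an edge $(a,\tilde b)$ and an isolated top vertex $c$ with $c<a$; (C3) pairs of an edge $(a,\tilde b)$ and an isolated bottom vertex $\tilde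 d$ with $d<b$. *)

theory Defs
  imports Complex_Main
begin

definition qint :: "real \<Rightarrow> nat \<Rightarrow> real" where
  "qint q n = (1 - q ^ n) / (1 - q)"

definition qfact :: "real \<Rightarrow> nat \<Rightarrow> real" where
  "qfact q n = (\<Prod>m = 1..n. qint q m)"

definition qbinom :: "real \<Rightarrow> nat \<Rightarrow> nat \<Rightarrow> real" where
  "qbinom q n m = (if m > n then 0 else qfact q n / (qfact q m * qfact q (n - m)))"

text \<open>Vertices are labelled by integers; a bottom vertex ~m is represented by the integer m.\<close>

definition top_verts :: "nat \<Rightarrow> nat \<Rightarrow> nat \<Rightarrow> int set" where
  "top_verts \<alpha> n j = {-(int \<alpha> + int j)..-1} \<union> {1..int n}"

definition bot_verts :: "nat \<Rightarrow> nat \<Rightarrow> int set" where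
  "bot_verts n j = {-int j..-1} \<union> {1..int n}"

text \<open>A bipartite matching is its set of edges (a, b) (a top, ~b bottom), each vertex
  in at most one edge; the remaining vertices are isolated.  No edge between T_- and B_-.\<close>
definition matchings :: "nat \<Rightarrow> nat \<Rightarrow> nat \<Rightarrow> (int \<times> int) set set" where
  "matchings \<alpha> n j = {M. M \<subseteq> top_verts \<alpha> n j \<times> bot_verts n j \<and>
      (\<forall>(a, b)\<in>M. \<forall>(c, d)\<in>M. (a = c \<longleftrightarrow> b = d)) \<and>
      (\<forall>(a, b)\<in>M. \<not> (a < 0 \<and> b < 0))}"

definition matchings_l :: "nat \<Rightarrow> nat \<Rightarrow> nat \<Rightarrow> nat \<Rightarrow> (int \<times> int) set set" where
  "matchings_l \<alpha> n j l = {M \<in> matchings \<alpha> n j. card M = l}"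

definition cr :: "nat \<Rightarrow> nat \<Rightarrow> nat \<Rightarrow> (int \<times> int) set \<Rightarrow> nat" where
  "cr \<alpha> n j M =
     card {(e, f). e \<in> M \<and> f \<in> M \<and> fst e < fst f \<and> snd f < snd e}
   + card {(e, c). e \<in> M \<and> c \<in> top_verts \<alpha> n j \<and> c \<notin> fst ` M \<and> c < fst e}
   + card {(e, d). e \<in> M \<and> d \<in> bot_verts n j \<and> d \<notin> snd ` M \<and> d < snd e}"

end

theory Submission
  imports Defs
begin

(* Induct on the top vertex set by removing its smallest vertex a.  If a is isolated, it lies
   left of the top end of every edge, contributing one (C2) crossing per edge: a factor q^t.
   If a is matched to b, the edge (a, b) crosses exactly the edges and the isolated bottom
   vertices whose bottom end lies left of b, i.e. it gains one crossing per bottom vertex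
   below b; summing q^(number of bottom vertices below b) over b gives [|B|]_q.  The two
   cases together are the q-Pascal rule for the first q-binomial coefficient, once
   [m]_q [m-1 choose t-1]_q [t-1]_q! = [m choose t]_q [t]_q! is used for the bottom row.
   Only the linear order of each row matters, so the identity holds for any finite linearly
   ordered rows A and B; for j = 0 there is no B_-, so the matchings of the statement are
   exactly the partial matchings between the two rows. *)

lemma qfact_0 [simp]: "qfact q 0 = 1"
  by (simp add: qfact_def)

lemma qfact_Suc: "qfact q (Suc n) = qfact q n * qint q (Suc n)"
  unfolding qfact_def by (simp add: prod.nat_ivl_Suc')

lemma qint_pos: "0 \<le> q \<Longrightarrow> q < 1 \<Longrightarrow> 0 < n \<Longrightarrow> 0 < qint q n"
  unfolding qint_def by (simp add: power_less_one_iff)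

lemma qfact_pos: "0 \<le> q \<Longrightarrow> q < 1 \<Longrightarrow> 0 < qfact q n"
  by (induction n) (simp_all add: qfact_Suc qint_pos)

lemma qbinom_0_right [simp]: "0 \<le> q \<Longrightarrow> q < 1 \<Longrightarrow> qbinom q n 0 = 1"
  using qfact_pos[of q n] by (simp add: qbinom_def)

lemma sum_power_lessThan_qint: "q \<noteq> 1 \<Longrightarrow> (\<Sum>k<n. q ^ k) = qint q n"
  by (simp add: sum_gp_strict qint_def)

lemma qint_add: "qint q (m + n) = qint q m + q ^ m * qint q n"
proof (cases "q = 1")
  case True then show ?thesis by (simp add: qint_def)
next
  case False then show ?thesis
    by (simp add: qint_def power_add field_simps)
qed

lemma qbinom_Suc_Suc:
  assumes "0 \<le> q" "q < 1"
  shows "qbinom q (Suc n) (Suc k) = qbinom q n k + q ^ Suc k * qbinom q n (Suc k)"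
proof (cases "k < n")
  case True
  then obtain r where n: "n = Suc (k + r)" using less_imp_Suc_add by blast
  have pos: "0 < qfact q k" "0 < qfact q r" "0 < qint q (Suc k)" "0 < qint q (Suc r)"
    using qfact_pos qint_pos assms by auto
  have "qint q (Suc n) = qint q (Suc k) + q ^ Suc k * qint q (Suc r)"
    using qint_add[of q "Suc k" "Suc r"] n by simp
  then show ?thesis
    using pos n by (simp add: qbinom_def qfact_Suc field_simps)
next
  case False
  then show ?thesis
    using qfact_pos[OF assms] by (cases "k = n") (simp_all add: qbinom_def order_less_imp_not_eq2)
qed

lemma qbinom_Suc_mult_qfact:
  assumes "0 \<le> q" "q < 1"
  shows "qbinom q m (Suc t) * qfact q (Suc t) = qint q m * qbinom q (m - 1) t * qfact q t"
proof (cases m)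
  case (Suc m')
  have "0 < qfact q t" "0 < qfact q (m' - t)" "0 < qint q (Suc t)"
    using qfact_pos qint_pos assms by auto
  then show ?thesis
    using Suc by (simp add: qbinom_def qfact_Suc)
qed (simp add: qbinom_def qint_def)

definition partial_matchings :: "'a set \<Rightarrow> 'b set \<Rightarrow> ('a \<times> 'b) set set" where
  "partial_matchings A B = {M. M \<subseteq> A \<times> B \<and> inj_on fst M \<and> inj_on snd M}"

definition edge_crossings :: "('a::linorder \<times> 'b::linorder) set \<Rightarrow> nat" where
  "edge_crossings M = card {(e, f). e \<in> M \<and> f \<in> M \<and> fst e < fst f \<and> snd f < snd e}"

definition top_crossings :: "'a::linorder set \<Rightarrow> ('a \<times> 'b) set \<Rightarrow> nat" where
  "top_crossings A M = card {(e, c). e \<in> M \<and> c \<in> A \<and> c \<notin> fst ` M \<and> c < fst e}"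

definition bottom_crossings :: "'b::linorder set \<Rightarrow> ('a \<times> 'b) set \<Rightarrow> nat" where
  "bottom_crossings B M = card {(e, d). e \<in> M \<and> d \<in> B \<and> d \<notin> snd ` M \<and> d < snd e}"

definition crossings :: "'a::linorder set \<Rightarrow> 'b::linorder set \<Rightarrow> ('a \<times> 'b) set \<Rightarrow> nat" where
  "crossings A B M = edge_crossings M + top_crossings A M + bottom_crossings B M"

lemma partial_matchings_iff:
  "M \<in> partial_matchings A B \<longleftrightarrow>
     M \<subseteq> A \<times> B \<and> (\<forall>(a, b)\<in>M. \<forall>(c, d)\<in>M. (a = c \<longleftrightarrow> b = d))"
proof -
  have "inj_on fst M \<and> inj_on snd M \<longleftrightarrow> (\<forall>(a, b)\<in>M. \<forall>(c, d)\<in>M. (a = c \<longleftrightarrow> b = d))"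
    unfolding inj_on_def Ball_def split_paired_All by auto
  then show ?thesis
    by (simp add: partial_matchings_def)
qed

lemma partial_matching_fst_eq_iff_snd_eq:
  "M \<in> partial_matchings A B \<Longrightarrow> (a, b) \<in> M \<Longrightarrow> (c, d) \<in> M \<Longrightarrow> a = c \<longleftrightarrow> b = d"
  unfolding partial_matchings_iff by fast

lemma finite_partial_matchings: "finite A \<Longrightarrow> finite B \<Longrightarrow> finite (partial_matchings A B)"
  by (rule finite_subset[of _ "Pow (A \<times> B)"]) (auto simp: partial_matchings_def)

lemma finite_partial_matching:
  "M \<in> partial_matchings A B \<Longrightarrow> finite A \<Longrightarrow> finite B \<Longrightarrow> finite M"
  by (auto simp: partial_matchings_def intro: finite_subset)

lemma partial_matchings_card_0:
  assumes "finite A" "finite B"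
  shows "{M \<in> partial_matchings A B. card M = 0} = {{}}"
  using finite_partial_matching[OF _ assms] by (auto simp: partial_matchings_def)

lemma crossings_empty [simp]: "crossings A B {} = 0"
  by (simp add: crossings_def edge_crossings_def top_crossings_def bottom_crossings_def)

lemma partial_matchings_insert:
  assumes "a \<notin> A"
  shows "partial_matchings (insert a A) B =
    partial_matchings A B \<union> (\<Union>b\<in>B. insert (a, b) ` partial_matchings A (B - {b}))"
proof (intro equalityI subsetI)
  fix M assume M: "M \<in> partial_matchings (insert a A) B"
  show "M \<in> partial_matchings A B \<union> (\<Union>b\<in>B. insert (a, b) ` partial_matchings A (B - {b}))"
  proof (cases "a \<in> fst ` M")
    case False
    with M have "M \<in> partial_matchings A B" by (force simp: partial_matchings_def)
    then show ?thesis ..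
  next
    case True
    then obtain b where ab: "(a, b) \<in> M" by force
    have "M - {(a, b)} \<subseteq> A \<times> (B - {b})"
      using partial_matching_fst_eq_iff_snd_eq[OF M ab] M by (auto simp: partial_matchings_def)
    with M have "M - {(a, b)} \<in> partial_matchings A (B - {b})"
      by (auto simp: partial_matchings_def intro: inj_on_diff)
    moreover have "b \<in> B" "M = insert (a, b) (M - {(a, b)})"
      using M ab by (auto simp: partial_matchings_def)
    ultimately show ?thesis by blast
  qed
next
  fix M assume "M \<in> partial_matchings A B \<union> (\<Union>b\<in>B. insert (a, b) ` partial_matchings A (B - {b}))"
  then show "M \<in> partial_matchings (insert a A) B"
    using assms by (auto simp: partial_matchings_def inj_on_insert)
qed

lemma top_crossings_insert_below:
  assumes "finite A" "finite M" "\<forall>c\<in>A. a < c" "fst ` M \<subseteq> A"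
  shows "top_crossings (insert a A) M = top_crossings A M + card M"
proof -
  let ?S = "{(e, c). e \<in> M \<and> c \<in> A \<and> c \<notin> fst ` M \<and> c < fst e}"
  have "{(e, c). e \<in> M \<and> c \<in> insert a A \<and> c \<notin> fst ` M \<and> c < fst e} = ?S \<union> (\<lambda>e. (e, a)) ` M"
    using assms by fastforce
  moreover have "finite ?S"
    by (rule finite_subset[of _ "M \<times> A"]) (use assms in auto)
  moreover have "?S \<inter> (\<lambda>e. (e, a)) ` M = {}"
    using assms by auto
  ultimately show ?thesis
    using assms by (simp add: top_crossings_def card_Un_disjoint card_image inj_on_def)
qed

lemma top_crossings_insert_edge_below:
  assumes "\<forall>c\<in>A. a < c" "fst ` M \<subseteq> A"
  shows "top_crossings (insert a A) (insert (a, b) M) = top_crossings A M"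
proof -
  have "{(e, c). e \<in> insert (a, b) M \<and> c \<in> insert a A \<and> c \<notin> fst ` insert (a, b) M \<and> c < fst e}
      = {(e, c). e \<in> M \<and> c \<in> A \<and> c \<notin> fst ` M \<and> c < fst e}"
    using assms by force
  then show ?thesis
    by (simp add: top_crossings_def)
qed

lemma edge_crossings_insert_below:
  assumes "finite M" "\<forall>c\<in>fst ` M. a < c"
  shows "edge_crossings (insert (a, b) M) = edge_crossings M + card {f \<in> M. snd f < b}"
proof -
  let ?S = "{(e, f). e \<in> M \<and> f \<in> M \<and> fst e < fst f \<and> snd f < snd e}"
  have "{(e, f). e \<in> insert (a, b) M \<and> f \<in> insert (a, b) M \<and> fst e < fst f \<and> snd f < snd e}
      = ?S \<union> Pair (a, b) ` {f \<in> M. snd f < b}"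
    using assms by force
  moreover have "finite ?S"
    by (rule finite_subset[of _ "M \<times> M"]) (use assms in auto)
  moreover have "?S \<inter> Pair (a, b) ` {f \<in> M. snd f < b} = {}"
    using assms by force
  ultimately show ?thesis
    using assms by (simp add: edge_crossings_def card_Un_disjoint card_image inj_on_def)
qed

lemma bottom_crossings_insert_edge:
  assumes "finite B" "finite M" "b \<in> B" "snd ` M \<subseteq> B - {b}"
  shows "bottom_crossings B (insert (a, b) M)
    = bottom_crossings (B - {b}) M + card {d \<in> B. d < b \<and> d \<notin> snd ` M}"
proof -
  let ?S = "{(e, d). e \<in> M \<and> d \<in> B - {b} \<and> d \<notin> snd ` M \<and> d < snd e}"
  have "{(e, d). e \<in> insert (a, b) M \<and> d \<in> B \<and> d \<notin> snd ` insert (a, b) M \<and> d < snd e}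
      = ?S \<union> Pair (a, b) ` {d \<in> B. d < b \<and> d \<notin> snd ` M}"
    using assms by force
  moreover have "finite ?S"
    by (rule finite_subset[of _ "M \<times> B"]) (use assms in auto)
  moreover have "?S \<inter> Pair (a, b) ` {d \<in> B. d < b \<and> d \<notin> snd ` M} = {}"
    using assms by force
  ultimately show ?thesis
    using assms by (simp add: bottom_crossings_def card_Un_disjoint card_image inj_on_def)
qed

lemma card_below_matched_unmatched:
  assumes "finite B" "inj_on snd M" "snd ` M \<subseteq> B"
  shows "card {f \<in> M. snd f < b} + card {d \<in> B. d < b \<and> d \<notin> snd ` M} = card {d \<in> B. d < b}"
proof -
  have "card {d \<in> B. d < b} = card (snd ` {f \<in> M. snd f < b} \<union> {d \<in> B. d < b \<and> d \<notin> snd ` M})"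
    using assms by (intro arg_cong[where f = card]) auto
  also have "\<dots> = card (snd ` {f \<in> M. snd f < b}) + card {d \<in> B. d < b \<and> d \<notin> snd ` M}"
    by (rule card_Un_disjoint) (use assms in \<open>auto intro: finite_subset[of _ B]\<close>)
  also have "card (snd ` {f \<in> M. snd f < b}) = card {f \<in> M. snd f < b}"
    using assms by (auto intro: card_image inj_on_subset)
  finally show ?thesis
    by simp
qed

lemma crossings_insert_unmatched_below:
  assumes "finite A" "finite B" "\<forall>c\<in>A. a < c" "M \<in> partial_matchings A B"
  shows "crossings (insert a A) B M = crossings A B M + card M"
proof -
  have "finite M" "fst ` M \<subseteq> A"
    using assms finite_partial_matching[OF assms(4)] by (auto simp: partial_matchings_def)
  with assms show ?thesis
    by (simp add: crossings_def top_crossings_insert_below)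
qed

lemma crossings_insert_edge_below:
  assumes "finite A" "finite B" "\<forall>c\<in>A. a < c" "b \<in> B" "M \<in> partial_matchings A (B - {b})"
  shows "crossings (insert a A) B (insert (a, b) M) = crossings A (B - {b}) M + card {d \<in> B. d < b}"
proof -
  have M: "finite M" "fst ` M \<subseteq> A" "snd ` M \<subseteq> B - {b}" "inj_on snd M"
    using assms finite_partial_matching[OF assms(5)] by (auto simp: partial_matchings_def)
  have "\<forall>c\<in>fst ` M. a < c"
    using M assms by blast
  then show ?thesis
    using assms M card_below_matched_unmatched[of B M b, OF _ _ subset_trans[OF M(3) Diff_subset]]
    by (simp add: crossings_def edge_crossings_insert_below top_crossings_insert_edge_below
        bottom_crossings_insert_edge)
qed

lemma sum_power_card_less:
  fixes x :: "'c::comm_semiring_1" and B :: "'a::linorder set"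
  assumes "finite B"
  shows "(\<Sum>b\<in>B. x ^ card {d \<in> B. d < b}) = (\<Sum>k<card B. x ^ k)"
  using assms
proof (induction B rule: finite_linorder_max_induct)
  case (insert b B)
  have "b \<notin> B"
    using insert.hyps by blast
  have "(\<Sum>c\<in>insert b B. x ^ card {d \<in> insert b B. d < c})
      = x ^ card {d \<in> insert b B. d < b} + (\<Sum>c\<in>B. x ^ card {d \<in> insert b B. d < c})"
    using insert.hyps \<open>b \<notin> B\<close> by simp
  also have "{d \<in> insert b B. d < b} = B"
    using insert.hyps by auto
  also have "(\<Sum>c\<in>B. x ^ card {d \<in> insert b B. d < c}) = (\<Sum>c\<in>B. x ^ card {d \<in> B. d < c})"
    using insert.hyps by (intro sum.cong refl arg_cong[where f = "\<lambda>S. x ^ card S"]) auto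
  finally show ?case
    using insert \<open>b \<notin> B\<close> by (simp add: add.commute)
qed simp

lemma partial_matchings_insert_card_Suc:
  assumes "a \<notin> A" "finite A" "finite B"
  shows "{M \<in> partial_matchings (insert a A) B. card M = Suc t} =
    {M \<in> partial_matchings A B. card M = Suc t} \<union>
    (\<Union>b\<in>B. insert (a, b) ` {M \<in> partial_matchings A (B - {b}). card M = t})"
proof -
  have "card (insert (a, b) M) = Suc (card M)" if "M \<in> partial_matchings A (B - {b})" for b M
    using that assms finite_partial_matching[OF that]
    by (subst card_insert_disjoint) (auto simp: partial_matchings_def)
  then show ?thesis
    unfolding partial_matchings_insert[OF assms(1)] by auto
qed

lemma sum_crossings_insert_edge_below:
  fixes q :: "'c::comm_semiring_1"
  assumes "finite A" "finite B" "\<forall>c\<in>A. a < c" "b \<in> B"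
  shows "(\<Sum>M\<in>insert (a, b) ` {M \<in> partial_matchings A (B - {b}). card M = t}.
            q ^ crossings (insert a A) B M)
    = q ^ card {d \<in> B. d < b} *
      (\<Sum>M\<in>{M \<in> partial_matchings A (B - {b}). card M = t}. q ^ crossings A (B - {b}) M)"
proof -
  have "(a, b) \<notin> M" if "M \<in> partial_matchings A (B - {b})" for M
    using that assms(3) by (auto simp: partial_matchings_def)
  then have "inj_on (insert (a, b)) {M \<in> partial_matchings A (B - {b}). card M = t}"
    by (intro inj_onI) (metis (no_types, lifting) mem_Collect_eq Diff_insert_absorb)
  then show ?thesis
    using assms
    by (simp add: sum.reindex crossings_insert_edge_below power_add sum_distrib_left mult_ac)
qed

lemma sum_crossings_insert_below:
  fixes q :: "'c::comm_semiring_1"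
  assumes "finite A" "finite B" "\<forall>c\<in>A. a < c"
  shows "(\<Sum>M\<in>{M \<in> partial_matchings (insert a A) B. card M = Suc t}. q ^ crossings (insert a A) B M)
    = q ^ Suc t * (\<Sum>M\<in>{M \<in> partial_matchings A B. card M = Suc t}. q ^ crossings A B M)
      + (\<Sum>b\<in>B. q ^ card {d \<in> B. d < b} *
          (\<Sum>M\<in>{M \<in> partial_matchings A (B - {b}). card M = t}. q ^ crossings A (B - {b}) M))"
proof -
  let ?U = "{M \<in> partial_matchings A B. card M = Suc t}"
  let ?V = "\<lambda>b. insert (a, b) ` {M \<in> partial_matchings A (B - {b}). card M = t}"
  have a: "a \<notin> A"
    using assms(3) by blast
  have fin: "finite ?U" "\<And>b. finite (?V b)"
    using assms by (simp_all add: finite_partial_matchings)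
  have "?U \<inter> (\<Union>b\<in>B. ?V b) = {}"
    using a by (auto simp: partial_matchings_def)
  moreover have "?V b \<inter> ?V b' = {}" if "b \<noteq> b'" for b b'
    using a that by (auto simp: partial_matchings_def)
  moreover have "(\<Sum>M\<in>?U. q ^ crossings (insert a A) B M) = q ^ Suc t * (\<Sum>M\<in>?U. q ^ crossings A B M)"
    using assms by (simp add: crossings_insert_unmatched_below power_add sum_distrib_left mult_ac)
  ultimately show ?thesis
    using assms fin
    by (simp add: partial_matchings_insert_card_Suc[OF a] sum.union_disjoint sum.UNION_disjoint
        sum_crossings_insert_edge_below)
qed

lemma sum_power_crossings_card_0:
  fixes q :: "'c::comm_semiring_1"
  assumes "finite A" "finite B"
  shows "(\<Sum>M\<in>{M \<in> partial_matchings A B. card M = 0}. q ^ crossings A B M) = 1"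
  by (simp add: partial_matchings_card_0[OF assms])

theorem sum_power_crossings_partial_matchings:
  fixes q :: real and A :: "'a::linorder set" and B :: "'b::linorder set"
  assumes "0 \<le> q" "q < 1" "finite A" "finite B"
  shows "(\<Sum>M\<in>{M \<in> partial_matchings A B. card M = t}. q ^ crossings A B M)
    = qbinom q (card A) t * qbinom q (card B) t * qfact q t"
  using assms(3,4)
proof (induction A arbitrary: B t rule: finite_linorder_min_induct)
  case empty
  show ?case
  proof (cases t)
    case Suc
    then have no_matchings: "{M \<in> partial_matchings {} B. card M = t} = {}"
      by (auto simp: partial_matchings_def)
    show ?thesis
      unfolding no_matchings using Suc by (simp add: qbinom_def)
  qed (simp add: sum_power_crossings_card_0 empty assms(1,2))
next
  case (insert a A)
  show ?case
  proof (cases t)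
    case (Suc s)
    let ?n = "card A" and ?m = "card B"
    have card_insert: "card (insert a A) = Suc ?n"
      using insert.hyps by (metis card_insert_disjoint less_irrefl)
    have IH: "(\<Sum>M\<in>{M \<in> partial_matchings A (B - {b}). card M = s}. q ^ crossings A (B - {b}) M)
        = qbinom q ?n s * qbinom q (?m - 1) s * qfact q s" if "b \<in> B" for b
      using insert.IH[of "B - {b}" s] insert.prems that by simp
    have "(\<Sum>b\<in>B. q ^ card {d \<in> B. d < b} *
            (\<Sum>M\<in>{M \<in> partial_matchings A (B - {b}). card M = s}. q ^ crossings A (B - {b}) M))
        = (\<Sum>b\<in>B. q ^ card {d \<in> B. d < b}) * (qbinom q ?n s * qbinom q (?m - 1) s * qfact q s)"
      by (simp add: IH sum_distrib_right)
    also have "(\<Sum>b\<in>B. q ^ card {d \<in> B. d < b}) = qint q ?m"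
      using insert.prems assms(2) by (simp add: sum_power_card_less sum_power_lessThan_qint)
    also have "qint q ?m * (qbinom q ?n s * qbinom q (?m - 1) s * qfact q s)
        = qbinom q ?n s * (qbinom q ?m (Suc s) * qfact q (Suc s))"
      unfolding qbinom_Suc_mult_qfact[OF assms(1,2)] by (simp only: mult_ac)
    finally show ?thesis
      using insert Suc card_insert
      by (simp add: sum_crossings_insert_below qbinom_Suc_Suc[OF assms(1,2)] algebra_simps)
  qed (simp add: sum_power_crossings_card_0 insert assms(1,2))
qed

lemma matchings_0_eq_partial_matchings:
  "matchings \<alpha> n 0 = partial_matchings (top_verts \<alpha> n 0) (bot_verts n 0)"
  unfolding matchings_def set_eq_iff mem_Collect_eq partial_matchings_iff
  by (auto simp: bot_verts_def)

lemma cr_eq_crossings: "cr \<alpha> n j M = crossings (top_verts \<alpha> n j) (bot_verts n j) M"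
  by (simp add: cr_def crossings_def edge_crossings_def top_crossings_def bottom_crossings_def)

lemma card_top_verts_0: "card (top_verts \<alpha> n 0) = n + \<alpha>"
  by (simp add: top_verts_def card_Un_disjoint)

theorem lemma2p5:
  fixes q :: real and \<alpha> p t :: nat
  assumes "0 < q" and "q < 1" and "t \<le> p"
  shows "(\<Sum>M\<in>matchings_l \<alpha> p 0 t. q ^ cr \<alpha> p 0 M)
         = qbinom q (p + \<alpha>) t * qbinom q p t * qfact q t"
proof -
  have "matchings_l \<alpha> p 0 t = {M \<in> partial_matchings (top_verts \<alpha> p 0) (bot_verts p 0). card M = t}"
    by (simp add: matchings_l_def matchings_0_eq_partial_matchings)
  moreover have "finite (top_verts \<alpha> p 0)" "finite (bot_verts p 0)" "card (bot_verts p 0) = p"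
    by (simp_all add: top_verts_def bot_verts_def)
  ultimately show ?thesis
    using assms(1,2) sum_power_crossings_partial_matchings[of q "top_verts \<alpha> p 0" "bot_verts p 0" t]
    by (simp add: cr_eq_crossings card_top_verts_0)
qed

end
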